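(* Let $(V,E)$ be a task hypergraph, let $R \subseteq V$ be the set of its initial vertices, and let $W \subseteq V \setminus R$. Then the relation $\mathcal{R} \subseteq \mathrm{Dom}(R)\times\mathrm{Dom}(W)$ defined by $$\exists v_1 \in \mathrm{Dom}(t_1)\cdots\exists v_m\in\mathrm{Dom}(t_m),\; e_1(R_1,W_1)\wedge\cdots\wedge e_n(R_n,W_n),$$ where $\{v_1,\dots,v_m\} = V\setminus(R\cup W)$ with types $t_1,\dots,t_m$ and $\{e_1,\dots,e_n\}=E$ (each $e_k$ a task with read set $R_k$ and write set $W_k$), is total: for every $r\in\mathrm{Dom}(R)$ there exists $w\in\mathrm{Dom}(W)$ with $(r,w)\in\mathcal{R}$. In other words, every relation in $\mathrm{TG}(R,W)$ is total.
   Context: Variables are typed; each type $t$ has a domain $\mathrm{Dom}(t)$ (e.g. $\mathrm{Dom}(\mathtt{unit})=\{()\}$, $\mathrm{Dom}(\mathtt{bool})=\{\mathrm{true},\mathrm{false}\}$, $\mathrm{Dom}(\mathtt{int})=\mathbb{Z}$). For a finite set of variables $V$, $\mathrm{Dom}(V)=\prod_{v\in V}\mathrm{Dom}(t_v)$ if $V\neq\emptyset$ and $\{()\}$ if $V=\emptyset$. A task $e$ with read set $R$ and write set $W$ (finite, disjoint variable sets), written $e(R,W)$, is a relation $e\subseteq \mathrm{Dom}(R)\times\mathrm{Dom}(W)$ that is total: for all $r\in\mathrm{Dom}(R)$ there is $w\in\mathrm{Dom}(W)$ with $(r,w)\in e$. A directed hypergraph $(V,E)$ has hyperedges $e$ with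 a source vertex set $\mathrm{In}(e)$ and a target vertex set $\mathrm{Out}(e)$; a vertex $v$ is initial if $v\notin\mathrm{Out}(e)$ for all $e\in E$. A task hypergraph (TG) is a directed hypergraph whose vertices are variables and whose hyperedges are tasks, such that (i) it is acyclic, (ii) no vertex is isolated, (iii) each vertex is in $\mathrm{Out}(e)$ for at most one $e$, and (iv) for each task $e(R_e,W_e)\in E$, $\mathrm{In}(e)=R_e$ and $\mathrm{Out}(e)=W_e$. $\mathrm{TG}(R,W)$ denotes the set of all relations obtained from TGs as in the claim. *)

theory Defs
  imports Main "HOL-Library.FuncSet"
begin

text \<open>Variables have type 'v, values live in a common universe 'val; the function
  tydom assigns to every variable the domain of its type.  An element of Dom(V) is
  an extensional assignment (undefined outside V); Dom({}) is a singleton.\<close>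

definition Dom :: "('v \<Rightarrow> 'val set) \<Rightarrow> 'v set \<Rightarrow> ('v \<Rightarrow> 'val) set" where
  "Dom tydom V = (\<Pi>\<^sub>E x\<in>V. tydom x)"

type_synonym ('v, 'val) task = "'v set \<times> 'v set \<times> (('v \<Rightarrow> 'val) \<times> ('v \<Rightarrow> 'val)) set"

definition reads :: "('v, 'val) task \<Rightarrow> 'v set" where "reads e = fst e"
definition writes :: "('v, 'val) task \<Rightarrow> 'v set" where "writes e = fst (snd e)"
definition rel :: "('v, 'val) task \<Rightarrow> (('v \<Rightarrow> 'val) \<times> ('v \<Rightarrow> 'val)) set" where
  "rel e = snd (snd e)"

definition is_task :: "('v \<Rightarrow> 'val set) \<Rightarrow> ('v, 'val) task \<Rightarrow> bool" where
  "is_task tydom e \<longleftrightarrow>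
     finite (reads e) \<and> finite (writes e) \<and> reads e \<inter> writes e = {} \<and>
     rel e \<subseteq> Dom tydom (reads e) \<times> Dom tydom (writes e) \<and>
     (\<forall>r\<in>Dom tydom (reads e). \<exists>w\<in>Dom tydom (writes e). (r, w) \<in> rel e)"

definition hg_edges :: "('v, 'val) task set \<Rightarrow> ('v \<times> 'v) set" where
  "hg_edges E = {(u, v). \<exists>e\<in>E. u \<in> reads e \<and> v \<in> writes e}"

definition task_hypergraph :: "('v \<Rightarrow> 'val set) \<Rightarrow> 'v set \<Rightarrow> ('v, 'val) task set \<Rightarrow> bool" where
  "task_hypergraph tydom V E \<longleftrightarrow>
     finite V \<and> finite E \<and>
     (\<forall>e\<in>E. is_task tydom e \<and> reads e \<subseteq> V \<and> writes e \<subseteq> V) \<and>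
     acyclic (hg_edges E) \<and>
     (\<forall>v\<in>V. \<exists>e\<in>E. v \<in> reads e \<union> writes e) \<and>
     (\<forall>v\<in>V. \<forall>e1\<in>E. \<forall>e2\<in>E. v \<in> writes e1 \<longrightarrow> v \<in> writes e2 \<longrightarrow> e1 = e2)"

definition initial_vertices :: "'v set \<Rightarrow> ('v, 'val) task set \<Rightarrow> 'v set" where
  "initial_vertices V E = {v\<in>V. \<forall>e\<in>E. v \<notin> writes e}"

text \<open>The relation of TG(R,W): r and w are related iff some assignment of all
  vertices (i.e. of the remaining vertices v_1..v_m) extends them and satisfies every task.\<close>
definition tg_rel :: "('v \<Rightarrow> 'val set) \<Rightarrow> 'v set \<Rightarrow> ('v, 'val) task set \<Rightarrow> 'v set \<Rightarrow> 'v set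
    \<Rightarrow> (('v \<Rightarrow> 'val) \<times> ('v \<Rightarrow> 'val)) set" where
  "tg_rel tydom V E R W =
     {(r, w). r \<in> Dom tydom R \<and> w \<in> Dom tydom W \<and>
        (\<exists>\<sigma>\<in>Dom tydom V. restrict \<sigma> R = r \<and> restrict \<sigma> W = w \<and>
           (\<forall>e\<in>E. (restrict \<sigma> (reads e), restrict \<sigma> (writes e)) \<in> rel e))}"

end

theory Submission
  imports Defs "HOL-Library.Disjoint_Sets"
begin

text \<open>Acyclicity lets us run the tasks in topological order.  A task all of whose reads are
  not written by any remaining task can fire first: its read values are already fixed, totality
  of the task provides values for its writes, and since no other task writes these vertices,
  the remaining tasks can be handled by induction without disturbing them.\<close>

definition satisfies_task :: "('v \<Rightarrow> 'val) \<Rightarrow> ('v, 'val) task \<Rightarrow> bool" where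
  "satisfies_task \<sigma> e \<longleftrightarrow> (restrict \<sigma> (reads e), restrict \<sigma> (writes e)) \<in> rel e"

lemma satisfies_task_cong:
  assumes "\<And>v. v \<in> reads e \<union> writes e \<Longrightarrow> \<sigma> v = \<sigma>' v"
  shows "satisfies_task \<sigma> e \<longleftrightarrow> satisfies_task \<sigma>' e"
proof -
  have "restrict \<sigma> (reads e) = restrict \<sigma>' (reads e)"
    and "restrict \<sigma> (writes e) = restrict \<sigma>' (writes e)"
    using assms by (auto intro: restrict_ext)
  then show ?thesis unfolding satisfies_task_def by simp
qed

lemma hg_edges_mono: "E \<subseteq> E' \<Longrightarrow> hg_edges E \<subseteq> hg_edges E'"
  unfolding hg_edges_def by blast

lemma wf_hg_edges:
  assumes "finite E" and "\<forall>e\<in>E. is_task tydom e" and "acyclic (hg_edges E)"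
  shows "wf (hg_edges E)"
proof (rule finite_acyclic_wf)
  have "hg_edges E \<subseteq> \<Union>(reads ` E) \<times> \<Union>(writes ` E)"
    unfolding hg_edges_def by auto
  moreover have "finite (\<Union>(reads ` E) \<times> \<Union>(writes ` E))"
    using assms(1,2) by (auto simp: is_task_def)
  ultimately show "finite (hg_edges E)" by (rule finite_subset)
qed (fact assms(3))

lemma exists_source_task:
  assumes "wf (hg_edges F)" and "F \<noteq> {}"
  shows "\<exists>e\<in>F. reads e \<inter> \<Union>(writes ` F) = {}"
proof (cases "\<Union>(writes ` F) = {}")
  case True
  then show ?thesis using assms(2) by auto
next
  case False
  then obtain v where "v \<in> \<Union>(writes ` F)"
    and minimal: "\<And>u. (u, v) \<in> hg_edges F \<Longrightarrow> u \<notin> \<Union>(writes ` F)"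
    using wfE_min[OF assms(1)] by (metis ex_in_conv)
  then obtain e where "e \<in> F" "v \<in> writes e" by auto
  then have "reads e \<inter> \<Union>(writes ` F) = {}"
    using minimal unfolding hg_edges_def by blast
  with \<open>e \<in> F\<close> show ?thesis by blast
qed

lemma is_task_extend:
  assumes task: "is_task tydom e" and \<sigma>\<^sub>0: "\<sigma>\<^sub>0 \<in> Pi (reads e) tydom"
  shows "\<exists>\<sigma>. (\<forall>v. v \<notin> writes e \<longrightarrow> \<sigma> v = \<sigma>\<^sub>0 v) \<and> \<sigma> \<in> Pi (writes e) tydom \<and> satisfies_task \<sigma> e"
proof -
  have "restrict \<sigma>\<^sub>0 (reads e) \<in> Dom tydom (reads e)"
    using \<sigma>\<^sub>0 unfolding Dom_def by auto
  then obtain w where w: "w \<in> Dom tydom (writes e)"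
    and rel: "(restrict \<sigma>\<^sub>0 (reads e), w) \<in> rel e"
    using task unfolding is_task_def by blast
  define \<sigma> where "\<sigma> v = (if v \<in> writes e then w v else \<sigma>\<^sub>0 v)" for v
  have "restrict \<sigma> (reads e) = restrict \<sigma>\<^sub>0 (reads e)"
    using task unfolding is_task_def \<sigma>_def by (intro restrict_ext) auto
  moreover have "restrict \<sigma> (writes e) = w"
    using w unfolding Dom_def \<sigma>_def by (auto simp: PiE_def extensional_def)
  ultimately have "satisfies_task \<sigma> e"
    using rel unfolding satisfies_task_def by simp
  moreover have "\<sigma> \<in> Pi (writes e) tydom"
    using w unfolding Dom_def \<sigma>_def by auto
  moreover have "\<forall>v. v \<notin> writes e \<longrightarrow> \<sigma> v = \<sigma>\<^sub>0 v"
    unfolding \<sigma>_def by simp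
  ultimately show ?thesis by blast
qed

definition solvable :: "('v \<Rightarrow> 'val set) \<Rightarrow> ('v, 'val) task set \<Rightarrow> bool" where
  "solvable tydom F \<longleftrightarrow>
     (\<forall>\<sigma>\<^sub>0 \<in> Pi (\<Union>(reads ` F) - \<Union>(writes ` F)) tydom.
        \<exists>\<sigma>. (\<forall>v. v \<notin> \<Union>(writes ` F) \<longrightarrow> \<sigma> v = \<sigma>\<^sub>0 v) \<and> \<sigma> \<in> Pi (\<Union>(writes ` F)) tydom \<and>
          (\<forall>e\<in>F. satisfies_task \<sigma> e))"

lemma solvableD:
  assumes "solvable tydom F" and "\<sigma>\<^sub>0 \<in> Pi (\<Union>(reads ` F) - \<Union>(writes ` F)) tydom"
  shows "\<exists>\<sigma>. (\<forall>v. v \<notin> \<Union>(writes ` F) \<longrightarrow> \<sigma> v = \<sigma>\<^sub>0 v) \<and> \<sigma> \<in> Pi (\<Union>(writes ` F)) tydom \<and>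
    (\<forall>e\<in>F. satisfies_task \<sigma> e)"
  using assms unfolding solvable_def by blast

lemma solvable_empty: "solvable tydom {}"
  unfolding solvable_def by auto

lemma solvable_insert_source:
  assumes task: "is_task tydom e" and source: "reads e \<inter> \<Union>(writes ` F) = {}"
    and writes_disj: "writes e \<inter> \<Union>(writes ` F) = {}" and "solvable tydom F"
  shows "solvable tydom (insert e F)"
  unfolding solvable_def
proof
  let ?W = "\<Union>(writes ` F)"
  fix \<sigma>\<^sub>0 assume \<sigma>\<^sub>0: "\<sigma>\<^sub>0 \<in> Pi (\<Union>(reads ` insert e F) - \<Union>(writes ` insert e F)) tydom"
  have "reads e \<inter> writes e = {}"
    using task unfolding is_task_def by blast
  then have "\<sigma>\<^sub>0 \<in> Pi (reads e) tydom"
    using \<sigma>\<^sub>0 source by auto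
  then obtain \<sigma>\<^sub>1 where \<sigma>\<^sub>1_eq: "\<forall>v. v \<notin> writes e \<longrightarrow> \<sigma>\<^sub>1 v = \<sigma>\<^sub>0 v"
    and \<sigma>\<^sub>1_typed: "\<sigma>\<^sub>1 \<in> Pi (writes e) tydom" and \<sigma>\<^sub>1_sat: "satisfies_task \<sigma>\<^sub>1 e"
    using is_task_extend[OF task] by blast
  have "\<sigma>\<^sub>1 v \<in> tydom v" if "v \<in> \<Union>(reads ` F) - ?W" for v
  proof (cases "v \<in> writes e")
    case True
    then show ?thesis using \<sigma>\<^sub>1_typed by blast
  next
    case False
    then show ?thesis using that \<sigma>\<^sub>0 \<sigma>\<^sub>1_eq by auto
  qed
  then have "\<sigma>\<^sub>1 \<in> Pi (\<Union>(reads ` F) - ?W) tydom" by (rule Pi_I)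
  from solvableD[OF \<open>solvable tydom F\<close> this] obtain \<sigma>
    where \<sigma>_eq: "\<forall>v. v \<notin> ?W \<longrightarrow> \<sigma> v = \<sigma>\<^sub>1 v"
      and \<sigma>_typed: "\<sigma> \<in> Pi ?W tydom" and \<sigma>_sat: "\<forall>e'\<in>F. satisfies_task \<sigma> e'"
    by blast
  have "v \<notin> ?W" if "v \<in> reads e \<union> writes e" for v
    using that source writes_disj by blast
  then have "\<sigma> v = \<sigma>\<^sub>1 v" if "v \<in> reads e \<union> writes e" for v
    using that \<sigma>_eq by simp
  then have "satisfies_task \<sigma> e"
    using \<sigma>\<^sub>1_sat satisfies_task_cong by blast
  then have "\<forall>e'\<in>insert e F. satisfies_task \<sigma> e'"
    using \<sigma>_sat by blast
  moreover have "\<sigma> \<in> Pi (writes e \<union> ?W) tydom"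
  proof
    fix v assume "v \<in> writes e \<union> ?W"
    then show "\<sigma> v \<in> tydom v"
      using \<sigma>_typed \<sigma>_eq \<sigma>\<^sub>1_typed writes_disj by (cases "v \<in> ?W") auto
  qed
  moreover have "\<forall>v. v \<notin> writes e \<union> ?W \<longrightarrow> \<sigma> v = \<sigma>\<^sub>0 v"
    using \<sigma>_eq \<sigma>\<^sub>1_eq by simp
  ultimately show "\<exists>\<sigma>. (\<forall>v. v \<notin> \<Union>(writes ` insert e F) \<longrightarrow> \<sigma> v = \<sigma>\<^sub>0 v) \<and>
      \<sigma> \<in> Pi (\<Union>(writes ` insert e F)) tydom \<and> (\<forall>e'\<in>insert e F. satisfies_task \<sigma> e')"
    by (intro exI[of _ \<sigma>]) simp
qed

lemma solvable_if_wf: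
  assumes "finite F" and "\<forall>e\<in>F. is_task tydom e" and "wf (hg_edges F)"
    and "disjoint_family_on writes F"
  shows "solvable tydom F"
  using assms
proof (induction F rule: finite_psubset_induct)
  case (psubset F)
  show ?case
  proof (cases "F = {}")
    case True
    then show ?thesis using solvable_empty by simp
  next
    case False
    then obtain e where e: "e \<in> F" and source: "reads e \<inter> \<Union>(writes ` F) = {}"
      using exists_source_task[OF psubset.prems(2)] by blast
    let ?F' = "F - {e}"
    have "?F' \<subset> F"
      using e by blast
    moreover have "\<forall>e'\<in>?F'. is_task tydom e'"
      using psubset.prems(1) by blast
    moreover have "wf (hg_edges ?F')"
      using psubset.prems(2) by (rule wf_subset) (rule hg_edges_mono, blast)
    moreover have "disjoint_family_on writes ?F'"
      by (rule disjoint_family_on_mono[OF _ psubset.prems(3)]) blast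
    ultimately have "solvable tydom ?F'"
      by (rule psubset.IH)
    moreover have "is_task tydom e"
      using psubset.prems(1) e by blast
    moreover have "reads e \<inter> \<Union>(writes ` ?F') = {}"
      using source by blast
    moreover have "writes e \<inter> \<Union>(writes ` ?F') = {}"
      using psubset.prems(3) e unfolding disjoint_family_on_def by blast
    ultimately have "solvable tydom (insert e ?F')"
      using solvable_insert_source by blast
    then show ?thesis using e by (simp add: insert_absorb)
  qed
qed

lemma task_hypergraph_solvable:
  assumes "task_hypergraph tydom V E"
  shows "solvable tydom E"
proof -
  have fin: "finite E" and tasks: "\<forall>e\<in>E. is_task tydom e" and acyclic: "acyclic (hg_edges E)"
    and within: "\<forall>e\<in>E. writes e \<subseteq> V"
    and unique_writer: "\<forall>v\<in>V. \<forall>e1\<in>E. \<forall>e2\<in>E. v \<in> writes e1 \<longrightarrow> v \<in> writes e2 \<longrightarrow> e1 = e2"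
    using assms unfolding task_hypergraph_def by auto
  have "wf (hg_edges E)" using fin tasks acyclic by (rule wf_hg_edges)
  moreover have "disjoint_family_on writes E"
    using unique_writer within unfolding disjoint_family_on_def by blast
  ultimately show ?thesis using fin tasks by (intro solvable_if_wf)
qed

lemma extend_initial_assignment:
  assumes tg: "task_hypergraph tydom V E" and r: "r \<in> Dom tydom (initial_vertices V E)"
  shows "\<exists>\<sigma>\<in>Dom tydom V. restrict \<sigma> (initial_vertices V E) = r \<and> (\<forall>e\<in>E. satisfies_task \<sigma> e)"
proof -
  let ?R = "initial_vertices V E" and ?W = "\<Union>(writes ` E)"
  have within: "\<forall>e\<in>E. reads e \<subseteq> V \<and> writes e \<subseteq> V"
    using tg unfolding task_hypergraph_def by auto
  have R: "?R = V - ?W"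
    unfolding initial_vertices_def by auto
  have "\<Union>(reads ` E) - ?W \<subseteq> ?R"
    using R within by blast
  then have "r \<in> Pi (\<Union>(reads ` E) - ?W) tydom"
    using r unfolding Dom_def by (auto dest: PiE_mem)
  from solvableD[OF task_hypergraph_solvable[OF tg] this] obtain \<sigma>
    where \<sigma>_eq: "\<forall>v. v \<notin> ?W \<longrightarrow> \<sigma> v = r v"
      and \<sigma>_typed: "\<sigma> \<in> Pi ?W tydom" and \<sigma>_sat: "\<forall>e\<in>E. satisfies_task \<sigma> e"
    by blast
  have "restrict \<sigma> ?R = restrict r ?R"
    using \<sigma>_eq R by (intro restrict_ext) blast
  also have "\<dots> = r"
    using r unfolding Dom_def by (rule PiE_restrict)
  finally have restrict_\<sigma>: "restrict \<sigma> ?R = r" .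
  have "\<sigma> v \<in> tydom v" if "v \<in> V" for v
  proof (cases "v \<in> ?W")
    case True
    then show ?thesis using \<sigma>_typed by blast
  next
    case False
    then have "v \<in> ?R" using that R by blast
    then show ?thesis using r \<sigma>_eq False unfolding Dom_def by (metis PiE_mem)
  qed
  moreover have "\<sigma> v = undefined" if "v \<notin> V" for v
  proof -
    have "v \<notin> ?R" "v \<notin> ?W" using that R within by blast+
    then show ?thesis using r \<sigma>_eq unfolding Dom_def by (metis PiE_arb)
  qed
  ultimately have "\<sigma> \<in> Dom tydom V"
    unfolding Dom_def by (rule PiE_I)
  with restrict_\<sigma> \<sigma>_sat show ?thesis by blast
qed

theorem lemma1:
  fixes tydom :: "'v \<Rightarrow> 'val set" and V :: "'v set" and E :: "('v, 'val) task set"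
    and R W :: "'v set"
  assumes "task_hypergraph tydom V E"
    and "R = initial_vertices V E"
    and "W \<subseteq> V - R"
  shows "\<forall>r\<in>Dom tydom R. \<exists>w\<in>Dom tydom W. (r, w) \<in> tg_rel tydom V E R W"
proof
  fix r assume r: "r \<in> Dom tydom R"
  then obtain \<sigma> where \<sigma>: "\<sigma> \<in> Dom tydom V" "restrict \<sigma> R = r"
    and sat: "\<forall>e\<in>E. satisfies_task \<sigma> e"
    using extend_initial_assignment assms(1,2) by blast
  have "restrict \<sigma> W \<in> Dom tydom W"
    using \<sigma>(1) assms(3) unfolding Dom_def by auto
  then show "\<exists>w\<in>Dom tydom W. (r, w) \<in> tg_rel tydom V E R W"
    using r \<sigma> sat unfolding tg_rel_def satisfies_task_def by blast
qed

end
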